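(* Let $\Lambda$ be a left cancellative small category, $v\in\Lambda^0$, and let $C\subseteq\mathcal D^{(0)}_v$ be a filter. Then $C\in v\Lambda^{**}$ if and only if for every $F\in\mathcal D^{(0)}_v$ such that $F\cap E\ne\varnothing$ for all $E\in C$, there exists $E\in C$ with $E\subseteq F$.
   Context: A left cancellative small category (LCSC) is a small category $\Lambda$ such that $\alpha\beta=\alpha\gamma$ implies $\beta=\gamma$. Composition $\alpha\beta$ is defined when $s(\alpha)=r(\beta)$; $\Lambda^0$ is the set of objects; $v\Lambda=\{\alpha:r(\alpha)=v\}$. For $\alpha\in\Lambda$, $\tau^\alpha(\beta)=\alpha\beta$ on $s(\alpha)\Lambda$ and $\sigma^\alpha:\alpha\Lambda\to s(\alpha)\Lambda$ is its inverse. A zigzag is a tuple $\zeta=(\alpha_1,\beta_1,\dots,\alpha_n,\beta_n)$ with $r(\alpha_i)=r(\beta_i)$ and $s(\alpha_{i+1})=s(\beta_i)$, $s(\zeta)=s(\beta_n)$; the zigzag map $\varphi_\zeta=\sigma^{\alpha_1}\circ\tau^{\beta_1}\circ\cdots\circ\sigma^{\alpha_n}\circ\tau^{\beta_n}$ (partial map) has domain $A(\zeta)\subseteq s(\zeta)\Lambda$. $\mathcal D^{(0)}_v$ is the set of nonempty $A(\zeta)$ with $s(\zeta)=v$ (closed under nonempty intersection). A filter in $\mathcal D^{(0)}_v$ is a nonempty $C\subseteq\mathcal D^{(0)}_v$ closed under intersection and under supersets within $\mathcal D^{(0)}_v$. A finite $\mathcal F\subseteq\mathcal D^{(0)}_v$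 covers the filter $C$ if some $E\in C$ satisfies $E\subseteq\bigcup\mathcal F$. $v\Lambda^*$ is the set of filters $C$ in $\mathcal D^{(0)}_v$ such that every finite $\mathcal F\subseteq\mathcal D^{(0)}_v$ with $\mathcal F\cap C=\varnothing$ does not cover $C$. $v\Lambda^{**}$ is the set of maximal elements of $v\Lambda^*$ with respect to inclusion. *)

theory Defs
  imports Main
begin

text \<open>A small category is given by a set of objects Obj, a set of morphisms Mor,
range r and source s maps, a composition cmp (cmp a b = ab, defined when s a = r b)
and identities idm.  Composition outside its domain is unspecified.\<close>

definition small_category ::
  "'o set \<Rightarrow> 'm set \<Rightarrow> ('m \<Rightarrow> 'o) \<Rightarrow> ('m \<Rightarrow> 'o) \<Rightarrow> ('m \<Rightarrow> 'm \<Rightarrow> 'm) \<Rightarrow> ('o \<Rightarrow> 'm) \<Rightarrow> bool" where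
  "small_category Obj Mor r s cmp idm \<longleftrightarrow>
     (\<forall>a\<in>Mor. r a \<in> Obj \<and> s a \<in> Obj) \<and>
     (\<forall>x\<in>Obj. idm x \<in> Mor \<and> r (idm x) = x \<and> s (idm x) = x) \<and>
     (\<forall>a\<in>Mor. \<forall>b\<in>Mor. s a = r b \<longrightarrow>
         cmp a b \<in> Mor \<and> r (cmp a b) = r a \<and> s (cmp a b) = s b) \<and>
     (\<forall>a\<in>Mor. cmp (idm (r a)) a = a \<and> cmp a (idm (s a)) = a) \<and>
     (\<forall>a\<in>Mor. \<forall>b\<in>Mor. \<forall>c\<in>Mor. s a = r b \<longrightarrow> s b = r c \<longrightarrow>
         cmp (cmp a b) c = cmp a (cmp b c))"

definition lcsc ::
  "'o set \<Rightarrow> 'm set \<Rightarrow> ('m \<Rightarrow> 'o) \<Rightarrow> ('m \<Rightarrow> 'o) \<Rightarrow> ('m \<Rightarrow> 'm \<Rightarrow> 'm) \<Rightarrow> ('o \<Rightarrow> 'm) \<Rightarrow> bool" where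
  "lcsc Obj Mor r s cmp idm \<longleftrightarrow> small_category Obj Mor r s cmp idm \<and>
     (\<forall>a\<in>Mor. \<forall>b\<in>Mor. \<forall>c\<in>Mor. s a = r b \<longrightarrow> s a = r c \<longrightarrow> cmp a b = cmp a c \<longrightarrow> b = c)"

text \<open>One step sigma^alpha o tau^beta of a zigzag map, as a partial map.\<close>
definition zz_step ::
  "'m set \<Rightarrow> ('m \<Rightarrow> 'o) \<Rightarrow> ('m \<Rightarrow> 'o) \<Rightarrow> ('m \<Rightarrow> 'm \<Rightarrow> 'm) \<Rightarrow> 'm \<Rightarrow> 'm \<Rightarrow> 'm \<Rightarrow> 'm option" where
  "zz_step Mor r s cmp \<alpha> \<beta> \<gamma> =
     (if \<gamma> \<in> Mor \<and> r \<gamma> = s \<beta> \<and> (\<exists>\<delta>\<in>Mor. r \<delta> = s \<alpha> \<and> cmp \<alpha> \<delta> = cmp \<beta> \<gamma>)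
      then Some (THE \<delta>. \<delta> \<in> Mor \<and> r \<delta> = s \<alpha> \<and> cmp \<alpha> \<delta> = cmp \<beta> \<gamma>)
      else None)"

text \<open>Zigzag map of the zigzag [(alpha_1,beta_1),...,(alpha_n,beta_n)]:
 sigma^alpha_1 o tau^beta_1 o ... o sigma^alpha_n o tau^beta_n (rightmost applied first).\<close>
fun zz_map ::
  "'m set \<Rightarrow> ('m \<Rightarrow> 'o) \<Rightarrow> ('m \<Rightarrow> 'o) \<Rightarrow> ('m \<Rightarrow> 'm \<Rightarrow> 'm) \<Rightarrow> ('m \<times> 'm) list \<Rightarrow> 'm \<Rightarrow> 'm option" where
  "zz_map Mor r s cmp [] \<gamma> = Some \<gamma>"
| "zz_map Mor r s cmp ((\<alpha>, \<beta>) # \<zeta>) \<gamma> =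
     Option.bind (zz_map Mor r s cmp \<zeta> \<gamma>) (zz_step Mor r s cmp \<alpha> \<beta>)"

definition is_zigzag ::
  "'m set \<Rightarrow> ('m \<Rightarrow> 'o) \<Rightarrow> ('m \<Rightarrow> 'o) \<Rightarrow> ('m \<times> 'm) list \<Rightarrow> bool" where
  "is_zigzag Mor r s \<zeta> \<longleftrightarrow> \<zeta> \<noteq> [] \<and>
     (\<forall>i<length \<zeta>. fst (\<zeta>!i) \<in> Mor \<and> snd (\<zeta>!i) \<in> Mor \<and> r (fst (\<zeta>!i)) = r (snd (\<zeta>!i))) \<and>
     (\<forall>i. Suc i < length \<zeta> \<longrightarrow> s (fst (\<zeta>!Suc i)) = s (snd (\<zeta>!i)))"

definition zz_src :: "('m \<Rightarrow> 'o) \<Rightarrow> ('m \<times> 'm) list \<Rightarrow> 'o" where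
  "zz_src s \<zeta> = s (snd (last \<zeta>))"

definition zz_dom ::
  "'m set \<Rightarrow> ('m \<Rightarrow> 'o) \<Rightarrow> ('m \<Rightarrow> 'o) \<Rightarrow> ('m \<Rightarrow> 'm \<Rightarrow> 'm) \<Rightarrow> ('m \<times> 'm) list \<Rightarrow> 'm set" where
  "zz_dom Mor r s cmp \<zeta> = {\<gamma> \<in> Mor. r \<gamma> = zz_src s \<zeta> \<and> zz_map Mor r s cmp \<zeta> \<gamma> \<noteq> None}"

definition D0 ::
  "'m set \<Rightarrow> ('m \<Rightarrow> 'o) \<Rightarrow> ('m \<Rightarrow> 'o) \<Rightarrow> ('m \<Rightarrow> 'm \<Rightarrow> 'm) \<Rightarrow> 'o \<Rightarrow> 'm set set" where
  "D0 Mor r s cmp v = {zz_dom Mor r s cmp \<zeta> | \<zeta>.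
      is_zigzag Mor r s \<zeta> \<and> zz_src s \<zeta> = v \<and> zz_dom Mor r s cmp \<zeta> \<noteq> {}}"

definition is_filter_in :: "'m set set \<Rightarrow> 'm set set \<Rightarrow> bool" where
  "is_filter_in D C \<longleftrightarrow> C \<subseteq> D \<and> C \<noteq> {} \<and>
     (\<forall>E\<in>C. \<forall>F\<in>C. E \<inter> F \<in> C) \<and>
     (\<forall>E\<in>C. \<forall>F\<in>D. E \<subseteq> F \<longrightarrow> F \<in> C)"

definition covers :: "'m set set \<Rightarrow> 'm set set \<Rightarrow> bool" where
  "covers \<F> C \<longleftrightarrow> (\<exists>E\<in>C. E \<subseteq> \<Union>\<F>)"

definition LamStar ::
  "'m set \<Rightarrow> ('m \<Rightarrow> 'o) \<Rightarrow> ('m \<Rightarrow> 'o) \<Rightarrow> ('m \<Rightarrow> 'm \<Rightarrow> 'm) \<Rightarrow> 'o \<Rightarrow> 'm set set set" where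
  "LamStar Mor r s cmp v = {C. is_filter_in (D0 Mor r s cmp v) C \<and>
     (\<forall>\<F>. finite \<F> \<longrightarrow> \<F> \<subseteq> D0 Mor r s cmp v \<longrightarrow> \<F> \<inter> C = {} \<longrightarrow> \<not> covers \<F> C)}"

definition LamStarStar ::
  "'m set \<Rightarrow> ('m \<Rightarrow> 'o) \<Rightarrow> ('m \<Rightarrow> 'o) \<Rightarrow> ('m \<Rightarrow> 'm \<Rightarrow> 'm) \<Rightarrow> 'o \<Rightarrow> 'm set set set" where
  "LamStarStar Mor r s cmp v = {C \<in> LamStar Mor r s cmp v.
     \<forall>C'\<in>LamStar Mor r s cmp v. C \<subseteq> C' \<longrightarrow> C' = C}"

end

theory Submission
  imports Defs
begin

text \<open>The sets in \<open>\<D> = D0 v\<close> are nonempty, and \<open>\<D>\<close> is closed under nonempty intersections: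
  \<open>A(\<zeta>) \<inter> A(\<xi>) = A(\<zeta>\<^sup>-\<^sup>1\<zeta>\<xi>\<^sup>-\<^sup>1\<xi>)\<close>, because left cancellation makes \<open>\<zeta>\<^sup>-\<^sup>1\<zeta>\<close> act as the
  identity on \<open>A(\<zeta>)\<close>.  Beyond this nothing about the category is used.  For such a family,
  a filter \<open>C\<close> with the stated property (call it ultra) lies in \<open>v\<Lambda>\<^sup>*\<close>: each \<open>F \<notin> C\<close> misses
  some member of \<open>C\<close>, so finitely many such \<open>F\<close> miss a common member and cannot cover \<open>C\<close>.
  Maximal filters are ultra, since a set meeting every member of \<open>U\<close> generates together
  with \<open>U\<close> a larger filter.  Hence a maximal element \<open>C\<close> of \<open>v\<Lambda>\<^sup>*\<close> equals any maximal filter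
  above it (Zorn), and is ultra; conversely an ultra filter has no proper filter above it.\<close>

definition ultra_in :: "'a set set \<Rightarrow> 'a set set \<Rightarrow> bool" where
  "ultra_in D C \<longleftrightarrow> (\<forall>F\<in>D. (\<forall>E\<in>C. F \<inter> E \<noteq> {}) \<longrightarrow> (\<exists>E\<in>C. E \<subseteq> F))"

definition maximal_filter_in :: "'a set set \<Rightarrow> 'a set set \<Rightarrow> bool" where
  "maximal_filter_in D U \<longleftrightarrow>
     is_filter_in D U \<and> (\<forall>U'. is_filter_in D U' \<longrightarrow> U \<subseteq> U' \<longrightarrow> U' = U)"

lemma is_filter_inD:
  assumes "is_filter_in D C"
  shows is_filter_in_subset: "C \<subseteq> D"
    and is_filter_in_nonempty: "C \<noteq> {}"
    and is_filter_in_Int: "E \<in> C \<Longrightarrow> F \<in> C \<Longrightarrow> E \<inter> F \<in> C"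
    and is_filter_in_upward: "E \<in> C \<Longrightarrow> F \<in> D \<Longrightarrow> E \<subseteq> F \<Longrightarrow> F \<in> C"
  using assms by (auto simp: is_filter_in_def)

lemma is_filter_in_Union_chain:
  assumes "\<C> \<noteq> {}" and filters: "\<And>X. X \<in> \<C> \<Longrightarrow> is_filter_in D X" and "chain\<^sub>\<subseteq> \<C>"
  shows "is_filter_in D (\<Union>\<C>)"
  unfolding is_filter_in_def
proof (intro conjI ballI impI)
  show "\<Union>\<C> \<subseteq> D" and "\<Union>\<C> \<noteq> {}"
    using \<open>\<C> \<noteq> {}\<close> filters is_filter_in_subset is_filter_in_nonempty by blast+
next
  fix E F assume "E \<in> \<Union>\<C>" "F \<in> \<Union>\<C>"
  then obtain X Y where "X \<in> \<C>" "Y \<in> \<C>" "E \<in> X" "F \<in> Y" by blast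
  moreover have "X \<subseteq> Y \<or> Y \<subseteq> X"
    using \<open>chain\<^sub>\<subseteq> \<C>\<close> \<open>X \<in> \<C>\<close> \<open>Y \<in> \<C>\<close> unfolding chain_subset_def by blast
  ultimately show "E \<inter> F \<in> \<Union>\<C>"
    using filters is_filter_in_Int by blast
next
  fix E F assume "E \<in> \<Union>\<C>" "F \<in> D" "E \<subseteq> F"
  then show "F \<in> \<Union>\<C>" using filters is_filter_in_upward by blast
qed

lemma is_filter_in_extends_to_maximal:
  assumes "is_filter_in D C"
  obtains U where "maximal_filter_in D U" and "C \<subseteq> U"
proof -
  let ?A = "{U. is_filter_in D U \<and> C \<subseteq> U}"
  have "\<exists>U\<in>?A. \<forall>X\<in>?A. U \<subseteq> X \<longrightarrow> X = U"
  proof (rule subset_Zorn_nonempty)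
    show "?A \<noteq> {}" using assms by blast
  next
    fix \<C> assume "\<C> \<noteq> {}" and "subset.chain ?A \<C>"
    then have "\<C> \<subseteq> ?A" and "chain\<^sub>\<subseteq> \<C>"
      by (auto simp: subset_chain_def chain_subset_def)
    then have "is_filter_in D (\<Union>\<C>)"
      using is_filter_in_Union_chain[OF \<open>\<C> \<noteq> {}\<close>] by blast
    moreover have "C \<subseteq> \<Union>\<C>" using \<open>\<C> \<noteq> {}\<close> \<open>\<C> \<subseteq> ?A\<close> by blast
    ultimately show "\<Union>\<C> \<in> ?A" by blast
  qed
  then obtain U where "is_filter_in D U" "C \<subseteq> U" "\<forall>X\<in>?A. U \<subseteq> X \<longrightarrow> X = U"
    by blast
  then have "maximal_filter_in D U"
    unfolding maximal_filter_in_def by blast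
  then show thesis using that \<open>C \<subseteq> U\<close> by blast
qed

lemma is_filter_in_add_meeting:
  assumes Int_closed: "\<And>E F. E \<in> D \<Longrightarrow> F \<in> D \<Longrightarrow> E \<inter> F \<noteq> {} \<Longrightarrow> E \<inter> F \<in> D"
    and U: "is_filter_in D U" and meets: "\<forall>E\<in>U. F \<inter> E \<noteq> {}"
  shows "is_filter_in D {G \<in> D. \<exists>E\<in>U. E \<inter> F \<subseteq> G}" (is "is_filter_in D ?U'")
  unfolding is_filter_in_def
proof (intro conjI ballI impI)
  show "?U' \<subseteq> D" by blast
  obtain E where "E \<in> U" using is_filter_in_nonempty[OF U] by blast
  then have "E \<in> ?U'" using is_filter_in_subset[OF U] by blast
  then show "?U' \<noteq> {}" by blast
next
  fix G1 G2 assume "G1 \<in> ?U'" "G2 \<in> ?U'"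
  then obtain E1 E2 where E: "E1 \<in> U" "E2 \<in> U" "E1 \<inter> F \<subseteq> G1" "E2 \<inter> F \<subseteq> G2"
    and G: "G1 \<in> D" "G2 \<in> D" by blast
  have "E1 \<inter> E2 \<in> U" using is_filter_in_Int[OF U] E by blast
  moreover have "E1 \<inter> E2 \<inter> F \<subseteq> G1 \<inter> G2" using E by blast
  moreover from calculation have "G1 \<inter> G2 \<noteq> {}"
    using meets by blast
  then have "G1 \<inter> G2 \<in> D" using Int_closed G by blast
  ultimately show "G1 \<inter> G2 \<in> ?U'" by blast
next
  fix G H assume "G \<in> ?U'" "H \<in> D" "G \<subseteq> H"
  then show "H \<in> ?U'" by blast
qed

lemma maximal_filter_in_imp_ultra_in:
  assumes Int_closed: "\<And>E F. E \<in> D \<Longrightarrow> F \<in> D \<Longrightarrow> E \<inter> F \<noteq> {} \<Longrightarrow> E \<inter> F \<in> D"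
    and maximal: "maximal_filter_in D U"
  shows "ultra_in D U"
  unfolding ultra_in_def
proof (intro ballI impI)
  fix F assume "F \<in> D" and meets: "\<forall>E\<in>U. F \<inter> E \<noteq> {}"
  let ?U' = "{G \<in> D. \<exists>E\<in>U. E \<inter> F \<subseteq> G}"
  have U: "is_filter_in D U" using maximal by (simp add: maximal_filter_in_def)
  have "U \<subseteq> ?U'" using is_filter_in_subset[OF U] by blast
  moreover have "is_filter_in D ?U'" by (rule is_filter_in_add_meeting[OF Int_closed U meets])
  ultimately have "?U' = U" using maximal unfolding maximal_filter_in_def by blast
  moreover have "F \<in> ?U'" using \<open>F \<in> D\<close> is_filter_in_nonempty[OF U] by blast
  ultimately show "\<exists>E\<in>U. E \<subseteq> F" by blast
qed

lemma ultra_in_disjoint_member: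
  assumes C: "is_filter_in D C" and "ultra_in D C" and "F \<in> D" and "F \<notin> C"
  obtains E where "E \<in> C" and "F \<inter> E = {}"
proof (rule ccontr)
  assume "\<not> thesis"
  with that have "\<forall>E\<in>C. F \<inter> E \<noteq> {}" by blast
  then obtain E where "E \<in> C" "E \<subseteq> F" using \<open>ultra_in D C\<close> \<open>F \<in> D\<close> unfolding ultra_in_def by blast
  then show False using is_filter_in_upward[OF C] \<open>F \<in> D\<close> \<open>F \<notin> C\<close> by blast
qed

lemma ultra_in_finite_disjoint_member:
  assumes C: "is_filter_in D C" and ultra: "ultra_in D C"
    and "finite \<F>" and "\<F> \<subseteq> D" and "\<F> \<inter> C = {}"
  obtains E where "E \<in> C" and "\<Union>\<F> \<inter> E = {}"
  using \<open>finite \<F>\<close> \<open>\<F> \<subseteq> D\<close> \<open>\<F> \<inter> C = {}\<close>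
proof (induction \<F> arbitrary: thesis rule: finite_induct)
  case empty
  then show ?case using is_filter_in_nonempty[OF C] by blast
next
  case (insert F \<F>)
  then obtain E where "E \<in> C" "\<Union>\<F> \<inter> E = {}" by blast
  moreover obtain E' where "E' \<in> C" "F \<inter> E' = {}"
    using ultra_in_disjoint_member[OF C ultra] insert.prems by blast
  ultimately show ?case
    using insert.prems(1) is_filter_in_Int[OF C] by blast
qed

lemma ultra_in_not_covers:
  assumes "{} \<notin> D" and C: "is_filter_in D C" and "ultra_in D C"
    and "finite \<F>" and "\<F> \<subseteq> D" and "\<F> \<inter> C = {}"
  shows "\<not> covers \<F> C"
proof
  assume "covers \<F> C"
  then obtain E where "E \<in> C" "E \<subseteq> \<Union>\<F>" unfolding covers_def by blast
  moreover obtain E' where "E' \<in> C" "\<Union>\<F> \<inter> E' = {}"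
    using ultra_in_finite_disjoint_member assms(2-) by blast
  ultimately have "E \<inter> E' \<in> C" and "E \<inter> E' = {}" using is_filter_in_Int[OF C] by blast+
  then have "{} \<in> C" by simp
  then show False using \<open>{} \<notin> D\<close> is_filter_in_subset[OF C] by blast
qed

lemma ultra_in_no_proper_extension:
  assumes "{} \<notin> D" and C: "is_filter_in D C" and ultra: "ultra_in D C"
    and C': "is_filter_in D C'" and "C \<subseteq> C'"
  shows "C' = C"
proof
  show "C' \<subseteq> C"
  proof
    fix F assume "F \<in> C'"
    then have "F \<in> D" using is_filter_in_subset[OF C'] by blast
    have "F \<inter> E \<noteq> {}" if "E \<in> C" for E
      using that \<open>F \<in> C'\<close> \<open>C \<subseteq> C'\<close> \<open>{} \<notin> D\<close> is_filter_in_Int[OF C'] is_filter_in_subset[OF C']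
      by (metis subsetD)
    then obtain E where "E \<in> C" "E \<subseteq> F" using ultra \<open>F \<in> D\<close> unfolding ultra_in_def by blast
    then show "F \<in> C" using is_filter_in_upward[OF C] \<open>F \<in> D\<close> by blast
  qed
qed fact

lemma zz_map_append:
  "zz_map Mor r s cmp (\<zeta> @ \<xi>) \<gamma> =
     Option.bind (zz_map Mor r s cmp \<xi> \<gamma>) (zz_map Mor r s cmp \<zeta>)"
proof (induction \<zeta> arbitrary: \<gamma>)
  case Nil
  then show ?case by (cases "zz_map Mor r s cmp \<xi> \<gamma>") auto
next
  case (Cons p \<zeta>)
  then show ?case by (cases p) simp
qed

lemma zz_step_swap:
  assumes L: "lcsc Obj Mor r s cmp idm" and "\<alpha> \<in> Mor" and "\<beta> \<in> Mor"
    and step: "zz_step Mor r s cmp \<alpha> \<beta> \<gamma> = Some \<delta>"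
  shows "zz_step Mor r s cmp \<beta> \<alpha> \<delta> = Some \<gamma>"
proof -
  have cancel: "\<And>x y z. \<lbrakk>x \<in> Mor; y \<in> Mor; z \<in> Mor; s x = r y; s x = r z; cmp x y = cmp x z\<rbrakk>
      \<Longrightarrow> y = z"
    using L unfolding lcsc_def by blast
  from step have \<gamma>: "\<gamma> \<in> Mor" "r \<gamma> = s \<beta>"
    and ex: "\<exists>\<delta>'\<in>Mor. r \<delta>' = s \<alpha> \<and> cmp \<alpha> \<delta>' = cmp \<beta> \<gamma>"
    and \<delta>_def: "\<delta> = (THE \<delta>'. \<delta>' \<in> Mor \<and> r \<delta>' = s \<alpha> \<and> cmp \<alpha> \<delta>' = cmp \<beta> \<gamma>)"
    unfolding zz_step_def by (auto split: if_splits)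
  from ex obtain \<delta>' where \<delta>': "\<delta>' \<in> Mor" "r \<delta>' = s \<alpha>" "cmp \<alpha> \<delta>' = cmp \<beta> \<gamma>" by blast
  have "\<delta> = \<delta>'" unfolding \<delta>_def
    by (rule the_equality) (use \<delta>' cancel \<open>\<alpha> \<in> Mor\<close> in auto)
  with \<delta>' have \<delta>: "\<delta> \<in> Mor" "r \<delta> = s \<alpha>" "cmp \<alpha> \<delta> = cmp \<beta> \<gamma>" by auto
  have "(THE \<gamma>'. \<gamma>' \<in> Mor \<and> r \<gamma>' = s \<beta> \<and> cmp \<beta> \<gamma>' = cmp \<alpha> \<delta>) = \<gamma>"
    by (rule the_equality) (use \<gamma> \<delta> cancel \<open>\<beta> \<in> Mor\<close> in auto)
  then show ?thesis using \<gamma> \<delta> unfolding zz_step_def by auto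
qed

definition zz_reverse :: "('m \<times> 'm) list \<Rightarrow> ('m \<times> 'm) list" where
  "zz_reverse \<zeta> = rev (map prod.swap \<zeta>)"

lemma zz_map_zz_reverse:
  assumes L: "lcsc Obj Mor r s cmp idm"
  shows "\<forall>p\<in>set \<zeta>. fst p \<in> Mor \<and> snd p \<in> Mor \<Longrightarrow> zz_map Mor r s cmp \<zeta> \<gamma> = Some \<delta>
     \<Longrightarrow> zz_map Mor r s cmp (zz_reverse \<zeta>) \<delta> = Some \<gamma>"
proof (induction \<zeta> arbitrary: \<delta>)
  case Nil
  then show ?case by (simp add: zz_reverse_def)
next
  case (Cons p \<zeta>)
  obtain \<alpha> \<beta> where p: "p = (\<alpha>, \<beta>)" by (cases p)
  from Cons.prems p obtain \<mu> where \<mu>: "zz_map Mor r s cmp \<zeta> \<gamma> = Some \<mu>"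
    and step: "zz_step Mor r s cmp \<alpha> \<beta> \<mu> = Some \<delta>"
    by (cases "zz_map Mor r s cmp \<zeta> \<gamma>") auto
  have "zz_step Mor r s cmp \<beta> \<alpha> \<delta> = Some \<mu>"
    using zz_step_swap[OF L _ _ step] Cons.prems p by auto
  moreover have "zz_map Mor r s cmp (zz_reverse \<zeta>) \<mu> = Some \<gamma>" using Cons \<mu> by auto
  ultimately show ?case using p by (simp add: zz_reverse_def zz_map_append)
qed

lemma is_zigzag_iff_successively:
  "is_zigzag Mor r s \<zeta> \<longleftrightarrow> \<zeta> \<noteq> [] \<and>
     (\<forall>p\<in>set \<zeta>. fst p \<in> Mor \<and> snd p \<in> Mor \<and> r (fst p) = r (snd p)) \<and>
     successively (\<lambda>p q. s (fst q) = s (snd p)) \<zeta>"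
  unfolding is_zigzag_def successively_conv_nth all_set_conv_all_nth
  by auto

lemma is_zigzag_zz_reverse:
  "is_zigzag Mor r s \<zeta> \<Longrightarrow> is_zigzag Mor r s (zz_reverse \<zeta>)"
  unfolding is_zigzag_iff_successively zz_reverse_def
  by (auto simp: successively_map elim!: successively_mono)

lemma zz_reverse_ends:
  assumes "\<zeta> \<noteq> []"
  shows "zz_reverse \<zeta> \<noteq> []" and "hd (zz_reverse \<zeta>) = prod.swap (last \<zeta>)"
    and "last (zz_reverse \<zeta>) = prod.swap (hd \<zeta>)"
  using assms by (auto simp: zz_reverse_def last_rev hd_rev last_map hd_map)

lemma is_zigzag_reverse_append:
  assumes "is_zigzag Mor r s \<zeta>" and "is_zigzag Mor r s \<xi>" and "zz_src s \<zeta> = zz_src s \<xi>"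
  shows "is_zigzag Mor r s (zz_reverse \<zeta> @ \<zeta> @ zz_reverse \<xi> @ \<xi>)"
    and "zz_src s (zz_reverse \<zeta> @ \<zeta> @ zz_reverse \<xi> @ \<xi>) = zz_src s \<xi>"
proof -
  have "\<zeta> \<noteq> []" "\<xi> \<noteq> []" using assms unfolding is_zigzag_def by auto
  then show "is_zigzag Mor r s (zz_reverse \<zeta> @ \<zeta> @ zz_reverse \<xi> @ \<xi>)"
    using assms is_zigzag_zz_reverse[OF assms(1)] is_zigzag_zz_reverse[OF assms(2)]
    unfolding is_zigzag_iff_successively
    by (auto simp: successively_append_iff zz_reverse_ends zz_src_def)
  show "zz_src s (zz_reverse \<zeta> @ \<zeta> @ zz_reverse \<xi> @ \<xi>) = zz_src s \<xi>"
    using \<open>\<xi> \<noteq> []\<close> by (simp add: zz_src_def)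
qed

lemma zz_dom_reverse_append:
  assumes L: "lcsc Obj Mor r s cmp idm"
    and "is_zigzag Mor r s \<zeta>" and "is_zigzag Mor r s \<xi>" and "zz_src s \<zeta> = zz_src s \<xi>"
  shows "zz_dom Mor r s cmp (zz_reverse \<zeta> @ \<zeta> @ zz_reverse \<xi> @ \<xi>) =
    zz_dom Mor r s cmp \<zeta> \<inter> zz_dom Mor r s cmp \<xi>" (is "zz_dom Mor r s cmp ?\<omega> = _")
proof (intro set_eqI iffI)
  have \<zeta>_Mor: "\<forall>p\<in>set \<zeta>. fst p \<in> Mor \<and> snd p \<in> Mor"
    and \<xi>_Mor: "\<forall>p\<in>set \<xi>. fst p \<in> Mor \<and> snd p \<in> Mor"
    using assms(2,3) unfolding is_zigzag_iff_successively by auto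
  note \<omega>_src = is_zigzag_reverse_append(2)[OF assms(2-4)]
  {
    fix \<gamma> assume "\<gamma> \<in> zz_dom Mor r s cmp ?\<omega>"
    then have \<gamma>: "\<gamma> \<in> Mor" "r \<gamma> = zz_src s \<xi>" and defined: "zz_map Mor r s cmp ?\<omega> \<gamma> \<noteq> None"
      using \<omega>_src unfolding zz_dom_def by auto
    from defined obtain \<delta> where \<delta>: "zz_map Mor r s cmp \<xi> \<gamma> = Some \<delta>"
      unfolding zz_map_append by (cases "zz_map Mor r s cmp \<xi> \<gamma>") auto
    with defined zz_map_zz_reverse[OF L \<xi>_Mor \<delta>] have "zz_map Mor r s cmp \<zeta> \<gamma> \<noteq> None"
      unfolding zz_map_append by (cases "zz_map Mor r s cmp \<zeta> \<gamma>") auto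
    then show "\<gamma> \<in> zz_dom Mor r s cmp \<zeta> \<inter> zz_dom Mor r s cmp \<xi>"
      using \<delta> \<gamma> assms(4) unfolding zz_dom_def by auto
  next
    fix \<gamma> assume "\<gamma> \<in> zz_dom Mor r s cmp \<zeta> \<inter> zz_dom Mor r s cmp \<xi>"
    then obtain \<delta> \<epsilon> where \<gamma>: "\<gamma> \<in> Mor" "r \<gamma> = zz_src s \<xi>"
      and \<delta>: "zz_map Mor r s cmp \<xi> \<gamma> = Some \<delta>" and \<epsilon>: "zz_map Mor r s cmp \<zeta> \<gamma> = Some \<epsilon>"
      unfolding zz_dom_def by auto
    have "zz_map Mor r s cmp ?\<omega> \<gamma> = Some \<gamma>"
      using \<delta> \<epsilon> zz_map_zz_reverse[OF L \<xi>_Mor \<delta>] zz_map_zz_reverse[OF L \<zeta>_Mor \<epsilon>]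
      unfolding zz_map_append by simp
    then show "\<gamma> \<in> zz_dom Mor r s cmp ?\<omega>" using \<gamma> \<omega>_src unfolding zz_dom_def by auto
  }
qed

lemma empty_notin_D0: "{} \<notin> D0 Mor r s cmp v"
  unfolding D0_def by blast

lemma D0_Int:
  assumes L: "lcsc Obj Mor r s cmp idm"
    and "E \<in> D0 Mor r s cmp v" and "F \<in> D0 Mor r s cmp v" and "E \<inter> F \<noteq> {}"
  shows "E \<inter> F \<in> D0 Mor r s cmp v"
proof -
  from assms(2) obtain \<zeta> where \<zeta>: "E = zz_dom Mor r s cmp \<zeta>" "is_zigzag Mor r s \<zeta>" "zz_src s \<zeta> = v"
    unfolding D0_def by blast
  from assms(3) obtain \<xi> where \<xi>: "F = zz_dom Mor r s cmp \<xi>" "is_zigzag Mor r s \<xi>" "zz_src s \<xi> = v"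
    unfolding D0_def by blast
  let ?\<omega> = "zz_reverse \<zeta> @ \<zeta> @ zz_reverse \<xi> @ \<xi>"
  have "zz_src s \<zeta> = zz_src s \<xi>" using \<zeta>(3) \<xi>(3) by simp
  then have "E \<inter> F = zz_dom Mor r s cmp ?\<omega>" and "is_zigzag Mor r s ?\<omega>" and "zz_src s ?\<omega> = v"
    using zz_dom_reverse_append[OF L \<zeta>(2) \<xi>(2)] is_zigzag_reverse_append[OF \<zeta>(2) \<xi>(2)] \<zeta> \<xi>
    by simp_all
  then show ?thesis using \<open>E \<inter> F \<noteq> {}\<close> unfolding D0_def by blast
qed

lemma ultra_in_D0_imp_LamStar:
  assumes "is_filter_in (D0 Mor r s cmp v) C" and "ultra_in (D0 Mor r s cmp v) C"
  shows "C \<in> LamStar Mor r s cmp v"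
  using assms ultra_in_not_covers[OF empty_notin_D0 assms] unfolding LamStar_def by simp

theorem mainTheorem11:
  fixes Obj :: "'o set" and Mor :: "'m set" and r s :: "'m \<Rightarrow> 'o"
    and cmp :: "'m \<Rightarrow> 'm \<Rightarrow> 'm" and idm :: "'o \<Rightarrow> 'm"
    and v :: 'o and C :: "'m set set"
  assumes "lcsc Obj Mor r s cmp idm"
    and "v \<in> Obj"
    and "is_filter_in (D0 Mor r s cmp v) C"
  shows "C \<in> LamStarStar Mor r s cmp v \<longleftrightarrow>
    (\<forall>F\<in>D0 Mor r s cmp v. (\<forall>E\<in>C. F \<inter> E \<noteq> {}) \<longrightarrow> (\<exists>E\<in>C. E \<subseteq> F))"
proof -
  let ?D = "D0 Mor r s cmp v"
  have LamStar_filter: "is_filter_in ?D C'" if "C' \<in> LamStar Mor r s cmp v" for C'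
    using that unfolding LamStar_def by blast
  have "C \<in> LamStarStar Mor r s cmp v \<longleftrightarrow> ultra_in ?D C"
  proof
    assume maximal: "C \<in> LamStarStar Mor r s cmp v"
    obtain U where U: "maximal_filter_in ?D U" and "C \<subseteq> U"
      using is_filter_in_extends_to_maximal[OF assms(3)] .
    have "ultra_in ?D U" using maximal_filter_in_imp_ultra_in[OF D0_Int[OF assms(1)] U] .
    moreover have "is_filter_in ?D U" using U unfolding maximal_filter_in_def by blast
    ultimately have "U \<in> LamStar Mor r s cmp v" by (rule ultra_in_D0_imp_LamStar[rotated])
    then have "U = C" using maximal \<open>C \<subseteq> U\<close> unfolding LamStarStar_def by blast
    with \<open>ultra_in ?D U\<close> show "ultra_in ?D C" by simp
  next
    assume ultra: "ultra_in ?D C"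
    have "C \<in> LamStar Mor r s cmp v" by (rule ultra_in_D0_imp_LamStar[OF assms(3) ultra])
    moreover have "C' = C" if "C' \<in> LamStar Mor r s cmp v" "C \<subseteq> C'" for C'
      using ultra_in_no_proper_extension[OF empty_notin_D0 assms(3) ultra LamStar_filter[OF that(1)] that(2)] .
    ultimately show "C \<in> LamStarStar Mor r s cmp v" unfolding LamStarStar_def by blast
  qed
  then show ?thesis unfolding ultra_in_def .
qed

end
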